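(* Let $K$ be a field, $S=K[x_1,\ldots,x_n]$, $I\subset S$ a monomial ideal with $I\ne S$ and $G(I)=\{x^{a_1},\ldots,x^{a_m}\}$, let $T$ be a polynomial ring over $K$, and let $L_1,\ldots,L_m$ be arbitrary monomial ideals of $T$. Then the complex $\mathbb{F}^*$ of $L_1,\ldots,L_m$ induced by $I$ (defined in the context) is a well-defined complex of $T$-modules, and $H_0(\mathbb{F}^* )=T/L$ where $L=\sum_{j=1}^mL_j$.
   Context: For $a\in\mathbb{N}^n$, $x^a=x_1^{a(1)}\cdots x_n^{a(n)}$; $G(I)$ is the minimal monomial generating set. Let $0\to F_p\to\cdots\to F_1\to F_0\to S/I\to 0$ be the $\mathbb{Z}^n$-graded minimal free resolution of $S/I$ with differential $\partial$, where $F_0=S$ with basis $f_{01}$ of degree $0$, and $F_i=\bigoplus_{j=1}^{\beta_i}Sf_{ij}$ with $f_{ij}$ homogeneous of multidegree $a_{ij}\in\mathbb{N}^n$; here $\beta_1=m$, $a_{1j}=a_j$ and $\partial(f_{1j})=x^{a_j}f_{01}$. Write $\partial(f_{ij})=\sum_k\lambda^{(i)}_{kj}x^{a_{ij}-a_{i-1,k}}f_{i-1,k}$ with $\lambda^{(i)}_{kj}\in K$, where $\lambda^{(i)}_{kj}=0$ whenever $a_{ij}-a_{i-1,k}\notin\mathbb{N}^n$; the matrices $\lambda^{(i)}=(\lambda^{(i)}_{kj})\in K^{\beta_{i-1}\times\beta_i}$ are the scalar matrices ($\lambda^{(1)}=(1,\ldots,1)$). The complex $\mathbb{F}^*$ is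 defined by $F^*_0=T$, $F^*_i=\bigoplus_{j=1}^{\beta_i}L_{ij}$ for $1\le i\le p$, where $L_{1j}=L_j$ and, for $i\ge2$, $L_{ij}=\bigcap_{k:\lambda^{(i)}_{kj}\neq0}L_{i-1,k}$; the map $\partial^*:F^*_i\to F^*_{i-1}$ sends a column vector $u=(u_1,\ldots,u_{\beta_i})^T$, $u_j\in L_{ij}$, to $\lambda^{(i)}u$. *)

theory Defs
  imports Main "HOL-Library.Poly_Mapping"
begin

text \<open>Polynomials over the field 'k in the variables of type 'v:
  finitely supported maps from exponent vectors to coefficients
  (multiplication of poly_mapping is the polynomial product).\<close>
type_synonym ('v, 'k) mpoly = "('v \<Rightarrow>\<^sub>0 nat) \<Rightarrow>\<^sub>0 'k"

definition mon :: "'k::zero \<Rightarrow> ('v \<Rightarrow>\<^sub>0 nat) \<Rightarrow> ('v, 'k) mpoly" where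
  "mon c a = Poly_Mapping.single a c"

text \<open>Componentwise order on exponent vectors (x^b divides x^a).\<close>
definition exp_le :: "('v \<Rightarrow>\<^sub>0 nat) \<Rightarrow> ('v \<Rightarrow>\<^sub>0 nat) \<Rightarrow> bool" where
  "exp_le b a \<longleftrightarrow> (\<forall>v. Poly_Mapping.lookup b v \<le> Poly_Mapping.lookup a v)"

definition is_ideal :: "'a::comm_ring_1 set \<Rightarrow> bool" where
  "is_ideal J \<longleftrightarrow> 0 \<in> J \<and> (\<forall>x\<in>J. \<forall>y\<in>J. x + y \<in> J) \<and> (\<forall>r. \<forall>x\<in>J. r * x \<in> J)"

definition ideal_gen :: "'a::comm_ring_1 set \<Rightarrow> 'a set" where
  "ideal_gen A = \<Inter>{J. is_ideal J \<and> A \<subseteq> J}"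

definition monomial_ideal :: "('v, 'k::field) mpoly set \<Rightarrow> bool" where
  "monomial_ideal J \<longleftrightarrow> (\<exists>B. J = ideal_gen ((\<lambda>b. mon 1 b) ` B))"

definition min_gens :: "('v, 'k::field) mpoly set \<Rightarrow> ('v, 'k) mpoly set" where
  "min_gens J = {mon 1 a | a. mon 1 a \<in> J \<and> (\<forall>b. mon 1 b \<in> J \<and> exp_le b a \<longrightarrow> b = a)}"

text \<open>Resolution data: beta i = rank of F_i, deg i j = multidegree a_ij of basis element f_ij
  (indices j start at 0), lam i k j = scalar matrix entry lambda^(i)_kj.
  Elements of F_i are vectors nat => S vanishing from index beta i on.\<close>
definition free_mod :: "(nat \<Rightarrow> nat) \<Rightarrow> nat \<Rightarrow> (nat \<Rightarrow> 'r::zero) set" where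
  "free_mod beta i = {u. \<forall>j\<ge>beta i. u j = 0}"

text \<open>The differential of the multigraded resolution:
  d(f_ij) = sum_k lam i k j x^(a_ij - a_(i-1)k) f_(i-1)k.\<close>
definition res_diff :: "(nat \<Rightarrow> nat) \<Rightarrow> (nat \<Rightarrow> nat \<Rightarrow> ('v \<Rightarrow>\<^sub>0 nat)) \<Rightarrow>
    (nat \<Rightarrow> nat \<Rightarrow> nat \<Rightarrow> 'k::field) \<Rightarrow> nat \<Rightarrow> (nat \<Rightarrow> ('v, 'k) mpoly) \<Rightarrow> (nat \<Rightarrow> ('v, 'k) mpoly)" where
  "res_diff beta deg lam i u =
     (\<lambda>k. if k < beta (i - 1)
          then (\<Sum>j<beta i. mon (lam i k j) (deg i j - deg (i - 1) k) * u j) else 0)"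

definition is_min_graded_res ::
  "('v, 'k::field) mpoly set \<Rightarrow> nat \<Rightarrow> (nat \<Rightarrow> ('v \<Rightarrow>\<^sub>0 nat)) \<Rightarrow> nat \<Rightarrow> (nat \<Rightarrow> nat) \<Rightarrow>
   (nat \<Rightarrow> nat \<Rightarrow> ('v \<Rightarrow>\<^sub>0 nat)) \<Rightarrow> (nat \<Rightarrow> nat \<Rightarrow> nat \<Rightarrow> 'k) \<Rightarrow> bool" where
  "is_min_graded_res I m a p beta deg lam \<longleftrightarrow>
     beta 0 = 1 \<and> deg 0 0 = 0 \<and> beta 1 = m \<and>
     (\<forall>j<m. deg 1 j = a j \<and> lam 1 0 j = 1) \<and>
     (\<forall>i>p. beta i = 0) \<and>
     (\<forall>i\<ge>1. \<forall>k<beta (i - 1). \<forall>j<beta i.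
        lam i k j \<noteq> 0 \<longrightarrow> exp_le (deg (i - 1) k) (deg i j) \<and> deg (i - 1) k \<noteq> deg i j) \<and>
     {res_diff beta deg lam 1 u 0 | u. u \<in> free_mod beta 1} = I \<and>
     (\<forall>i\<ge>1. {u \<in> free_mod beta i. res_diff beta deg lam i u = (\<lambda>_. 0)} =
             res_diff beta deg lam (Suc i) ` free_mod beta (Suc i))"

text \<open>The ideals L_ij of the complex F^*; L_0j = T (F^*_0 = T), L_1j = L_j,
  L_ij = intersection of L_(i-1)k over k with lam i k j \<noteq> 0 (empty intersection = T).\<close>
fun Lstar :: "(nat \<Rightarrow> nat) \<Rightarrow> (nat \<Rightarrow> nat \<Rightarrow> nat \<Rightarrow> 'k::field) \<Rightarrow> (nat \<Rightarrow> 'r set) \<Rightarrow>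
    nat \<Rightarrow> nat \<Rightarrow> 'r set" where
  "Lstar beta lam L 0 j = UNIV"
| "Lstar beta lam L (Suc 0) j = L j"
| "Lstar beta lam L (Suc (Suc i)) j =
     \<Inter>{Lstar beta lam L (Suc i) k | k. k < beta (Suc i) \<and> lam (Suc (Suc i)) k j \<noteq> 0}"

definition Fstar :: "(nat \<Rightarrow> nat) \<Rightarrow> (nat \<Rightarrow> nat \<Rightarrow> nat \<Rightarrow> 'k::field) \<Rightarrow> (nat \<Rightarrow> ('w, 'k) mpoly set) \<Rightarrow>
    nat \<Rightarrow> (nat \<Rightarrow> ('w, 'k) mpoly) set" where
  "Fstar beta lam L i = {u. (\<forall>j<beta i. u j \<in> Lstar beta lam L i j) \<and> (\<forall>j\<ge>beta i. u j = 0)}"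

definition dstar :: "(nat \<Rightarrow> nat) \<Rightarrow> (nat \<Rightarrow> nat \<Rightarrow> nat \<Rightarrow> 'k::field) \<Rightarrow>
    nat \<Rightarrow> (nat \<Rightarrow> ('w, 'k) mpoly) \<Rightarrow> (nat \<Rightarrow> ('w, 'k) mpoly)" where
  "dstar beta lam i u =
     (\<lambda>k. if k < beta (i - 1) then (\<Sum>j<beta i. mon (lam i k j) 0 * u j) else 0)"

end

theory Submission
  imports Defs
begin

text \<open>All \<open>L\<^sub>i\<^sub>j\<close> are ideals, so \<open>F\<^sup>*\<close> is a module, and \<open>\<partial>\<^sup>*\<close>, being multiplication by a
  scalar matrix, is linear; it maps \<open>F\<^sup>*\<^sub>i\<close> into \<open>F\<^sup>*\<^sub>i\<^sub>-\<^sub>1\<close> because \<open>L\<^sub>i\<^sub>j\<close> lies in every \<open>L\<^sub>i\<^sub>-\<^sub>1\<^sub>,\<^sub>k\<close> with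
  a nonzero entry in row \<open>k\<close>, column \<open>j\<close> of \<open>\<lambda>\<^sup>(\<^sup>i\<^sup>)\<close>. For \<open>\<partial>\<^sup>*\<partial>\<^sup>* = 0\<close>, apply \<open>\<partial>\<partial> = 0\<close> to the
  basis element \<open>f\<^sub>i\<^sub>j\<close> of the resolution: by homogeneity every monomial in coordinate \<open>k\<close>
  of the result is \<open>x\<close> to the same power \<open>a\<^sub>i\<^sub>j - a\<^sub>i\<^sub>-\<^sub>2\<^sub>,\<^sub>k\<close>, so its coefficient, the \<open>(k,j)\<close> entry of
  \<open>\<lambda>\<^sup>(\<^sup>i\<^sup>-\<^sup>1\<^sup>) \<lambda>\<^sup>(\<^sup>i\<^sup>)\<close>, vanishes. Finally \<open>\<lambda>\<^sup>(\<^sup>1\<^sup>) = (1,\<dots>,1)\<close>, so the image of \<open>\<partial>\<^sup>*\<^sub>1\<close> is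
  \<open>L\<^sub>1 + \<dots> + L\<^sub>m\<close>.\<close>

lemma is_ideal_ideal_gen: "is_ideal (ideal_gen A)"
  unfolding ideal_gen_def is_ideal_def by auto

lemma ideal_gen_superset: "A \<subseteq> ideal_gen A"
  unfolding ideal_gen_def by auto

lemma ideal_gen_minimal: "is_ideal J \<Longrightarrow> A \<subseteq> J \<Longrightarrow> ideal_gen A \<subseteq> J"
  unfolding ideal_gen_def by auto

lemma monomial_ideal_is_ideal: "monomial_ideal J \<Longrightarrow> is_ideal J"
  unfolding monomial_ideal_def using is_ideal_ideal_gen by auto

lemma is_ideal_Inter: "(\<And>J. J \<in> F \<Longrightarrow> is_ideal J) \<Longrightarrow> is_ideal (\<Inter>F)"
  unfolding is_ideal_def by auto

lemma is_ideal_sum: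
  assumes "is_ideal J" and "\<And>x. x \<in> A \<Longrightarrow> f x \<in> J"
  shows "sum f A \<in> J"
  using assms(2)
proof (induction A rule: infinite_finite_induct)
  case (insert x F)
  then show ?case using assms(1) by (simp add: is_ideal_def)
qed (use assms(1) in \<open>simp_all add: is_ideal_def\<close>)

lemma mon_mult: "mon a b * mon c d = mon (a * c) (b + d)"
  unfolding mon_def by (simp add: mult_single)

lemma mon_zero_coeff [simp]: "mon 0 b = 0"
  unfolding mon_def by simp

lemma mon_one_zero [simp]: "mon 1 0 = 1"
  unfolding mon_def by simp

lemma sum_mon: "(\<Sum>l\<in>A. mon (f l) d) = mon (\<Sum>l\<in>A. f l) d"
  unfolding mon_def by (induction A rule: infinite_finite_induct) (auto simp: single_add)

lemma mon_eq_zero_iff: "mon c d = 0 \<longleftrightarrow> c = 0"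
  unfolding mon_def by (metis lookup_single_eq lookup_zero single_zero)

lemma exp_le_diff_add:
  assumes "exp_le c b" and "exp_le b a"
  shows "(b - c) + (a - b) = a - c"
proof (rule poly_mapping_eqI)
  fix v
  have "Poly_Mapping.lookup c v \<le> Poly_Mapping.lookup b v"
    and "Poly_Mapping.lookup b v \<le> Poly_Mapping.lookup a v"
    using assms unfolding exp_le_def by auto
  then show "Poly_Mapping.lookup (b - c + (a - b)) v = Poly_Mapping.lookup (a - c) v"
    by (simp add: lookup_add lookup_minus)
qed

lemma res_diff_unit_vector:
  assumes "j < beta i"
  shows "res_diff beta deg lam i (\<lambda>t. if t = j then 1 else 0)
       = (\<lambda>l. if l < beta (i - 1) then mon (lam i l j) (deg i j - deg (i - 1) l) else 0)"
  using assms by (simp add: res_diff_def if_distrib[of "\<lambda>x. _ * x"] cong: if_cong)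

lemma scalar_matrix_mult_eq_zero:
  fixes deg :: "nat \<Rightarrow> nat \<Rightarrow> ('v \<Rightarrow>\<^sub>0 nat)" and lam :: "nat \<Rightarrow> nat \<Rightarrow> nat \<Rightarrow> 'k::field"
  assumes k: "k < beta n" and j: "j < beta (Suc (Suc n))"
    and compat_k: "\<And>l. l < beta (Suc n) \<Longrightarrow> lam (Suc n) k l \<noteq> 0 \<Longrightarrow> exp_le (deg n k) (deg (Suc n) l)"
    and compat_j: "\<And>l. l < beta (Suc n) \<Longrightarrow> lam (Suc (Suc n)) l j \<noteq> 0 \<Longrightarrow>
                        exp_le (deg (Suc n) l) (deg (Suc (Suc n)) j)"
    and comp_zero: "\<And>u. u \<in> free_mod beta (Suc (Suc n)) \<Longrightarrow>
        res_diff beta deg lam (Suc n) (res_diff beta deg lam (Suc (Suc n)) u) = (\<lambda>_. 0 :: ('v, 'k) mpoly)"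
  shows "(\<Sum>l<beta (Suc n). lam (Suc n) k l * lam (Suc (Suc n)) l j) = 0"
proof -
  define e :: "nat \<Rightarrow> ('v, 'k) mpoly" where "e = (\<lambda>t. if t = j then 1 else 0)"
  define D where "D = deg (Suc (Suc n)) j - deg n k"
  have "e \<in> free_mod beta (Suc (Suc n))" using j unfolding e_def free_mod_def by auto
  then have "0 = res_diff beta deg lam (Suc n) (res_diff beta deg lam (Suc (Suc n)) e) k"
    using comp_zero by metis
  also have "\<dots> = (\<Sum>l<beta (Suc n). mon (lam (Suc n) k l) (deg (Suc n) l - deg n k)
                    * mon (lam (Suc (Suc n)) l j) (deg (Suc (Suc n)) j - deg (Suc n) l))"
    using k j unfolding e_def by (simp add: res_diff_unit_vector) (simp add: res_diff_def)
  also have "\<dots> = (\<Sum>l<beta (Suc n). mon (lam (Suc n) k l * lam (Suc (Suc n)) l j) D)"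
  proof (rule sum.cong [OF refl])
    fix l assume "l \<in> {..<beta (Suc n)}"
    then show "mon (lam (Suc n) k l) (deg (Suc n) l - deg n k)
             * mon (lam (Suc (Suc n)) l j) (deg (Suc (Suc n)) j - deg (Suc n) l)
             = mon (lam (Suc n) k l * lam (Suc (Suc n)) l j) D"
      using compat_k compat_j by (cases "lam (Suc n) k l = 0 \<or> lam (Suc (Suc n)) l j = 0")
        (auto simp: mon_mult D_def exp_le_diff_add)
  qed
  also have "\<dots> = mon (\<Sum>l<beta (Suc n). lam (Suc n) k l * lam (Suc (Suc n)) l j) D"
    by (rule sum_mon)
  finally show ?thesis by (simp add: mon_eq_zero_iff)
qed

lemma Lstar_is_ideal:
  assumes "\<And>j. j < beta 1 \<Longrightarrow> is_ideal (L j)"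
  shows "j < beta i \<Longrightarrow> is_ideal (Lstar beta lam L i j)"
proof (induction i arbitrary: j)
  case 0
  then show ?case by (simp add: is_ideal_def)
next
  case (Suc i)
  then show ?case
    using assms by (cases i) (auto intro!: is_ideal_Inter)
qed

lemma Fstar_is_submodule:
  assumes "\<And>j. j < beta i \<Longrightarrow> is_ideal (Lstar beta lam L i j)"
  shows "(\<lambda>_. 0) \<in> Fstar beta lam L i"
    and "u \<in> Fstar beta lam L i \<Longrightarrow> v \<in> Fstar beta lam L i \<Longrightarrow> (\<lambda>j. u j + v j) \<in> Fstar beta lam L i"
    and "u \<in> Fstar beta lam L i \<Longrightarrow> (\<lambda>j. r * u j) \<in> Fstar beta lam L i"
  using assms unfolding Fstar_def is_ideal_def by auto

lemma dstar_linear: "dstar beta lam i (\<lambda>j. r * u j + v j) = (\<lambda>k. r * dstar beta lam i u k + dstar beta lam i v k)"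
  by (auto simp: dstar_def fun_eq_iff algebra_simps sum_distrib_left sum.distrib)

lemma dstar_in_Fstar:
  assumes ideals: "\<And>i j. j < beta i \<Longrightarrow> is_ideal (Lstar beta lam L i j)"
    and u: "u \<in> Fstar beta lam L (Suc i)"
  shows "dstar beta lam (Suc i) u \<in> Fstar beta lam L i"
proof (cases i)
  case 0
  then show ?thesis by (simp add: Fstar_def dstar_def)
next
  case (Suc i')
  have "(\<Sum>j<beta (Suc i). mon (lam (Suc i) k j) 0 * u j) \<in> Lstar beta lam L i k"
    if k: "k < beta i" for k
  proof (rule is_ideal_sum [OF ideals [OF k]])
    fix j assume j: "j \<in> {..<beta (Suc i)}"
    show "mon (lam (Suc i) k j) 0 * u j \<in> Lstar beta lam L i k"
    proof (cases "lam (Suc i) k j = 0")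
      case False
      have "u j \<in> Lstar beta lam L (Suc i) j" using u j unfolding Fstar_def by auto
      then have "u j \<in> Lstar beta lam L i k" using False k Suc by auto
      then show ?thesis using ideals [OF k] unfolding is_ideal_def by blast
    qed (use ideals [OF k] in \<open>simp add: is_ideal_def\<close>)
  qed
  then show ?thesis by (auto simp: Fstar_def dstar_def)
qed

lemma dstar_dstar_eq_zero:
  assumes "\<And>k j. k < beta n \<Longrightarrow> j < beta (Suc (Suc n)) \<Longrightarrow>
             (\<Sum>l<beta (Suc n). lam (Suc n) k l * lam (Suc (Suc n)) l j) = 0"
  shows "dstar beta lam (Suc n) (dstar beta lam (Suc (Suc n)) u) = (\<lambda>_. 0)"
proof
  fix k
  show "dstar beta lam (Suc n) (dstar beta lam (Suc (Suc n)) u) k = 0"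
  proof (cases "k < beta n")
    case True
    have "dstar beta lam (Suc n) (dstar beta lam (Suc (Suc n)) u) k
        = (\<Sum>l<beta (Suc n). \<Sum>j<beta (Suc (Suc n)).
             mon (lam (Suc n) k l) 0 * (mon (lam (Suc (Suc n)) l j) 0 * u j))"
      using True by (simp add: dstar_def sum_distrib_left)
    also have "\<dots> = (\<Sum>j<beta (Suc (Suc n)).
                      mon (\<Sum>l<beta (Suc n). lam (Suc n) k l * lam (Suc (Suc n)) l j) 0 * u j)"
      by (subst sum.swap) (simp add: mult.assoc [symmetric] mon_mult sum_distrib_right sum_mon [symmetric])
    also have "\<dots> = 0"
      using assms [OF True] by simp
    finally show ?thesis .
  qed (simp add: dstar_def)
qed

lemma dstar_one_sum:
  assumes "beta 0 = 1" and "\<And>j. j < beta 1 \<Longrightarrow> lam 1 0 j = 1"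
  shows "dstar beta lam 1 u 0 = (\<Sum>j<beta 1. u j)"
  using assms by (simp add: dstar_def)

lemma sum_image_Fstar_one:
  assumes "\<And>j. j < beta 1 \<Longrightarrow> is_ideal (L j)"
  shows "{(\<Sum>j<beta 1. u j) | u. u \<in> Fstar beta lam L 1} = ideal_gen (\<Union>j<beta 1. L j)"
    (is "?T = ideal_gen ?U")
proof
  show "?T \<subseteq> ideal_gen ?U"
  proof clarify
    fix u assume "u \<in> Fstar beta lam L 1"
    then have "u j \<in> ideal_gen ?U" if "j < beta 1" for j
      using that ideal_gen_superset unfolding Fstar_def by fastforce
    then show "(\<Sum>j<beta 1. u j) \<in> ideal_gen ?U"
      by (auto intro: is_ideal_sum [OF is_ideal_ideal_gen])
  qed
next
  have F1: "\<And>j. j < beta 1 \<Longrightarrow> is_ideal (Lstar beta lam L 1 j)"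
    using assms by simp
  have "is_ideal ?T"
    unfolding is_ideal_def
  proof (intro conjI ballI allI)
    show "0 \<in> ?T"
      using Fstar_is_submodule(1) [OF F1] by force
    fix x y assume "x \<in> ?T" "y \<in> ?T"
    then obtain u v where "x = (\<Sum>j<beta 1. u j)" "y = (\<Sum>j<beta 1. v j)"
      and "u \<in> Fstar beta lam L 1" "v \<in> Fstar beta lam L 1" by blast
    then show "x + y \<in> ?T"
      using Fstar_is_submodule(2) [OF F1] by (force simp: sum.distrib)
  next
    fix r x assume "x \<in> ?T"
    then obtain u where "x = (\<Sum>j<beta 1. u j)" and "u \<in> Fstar beta lam L 1" by blast
    then show "r * x \<in> ?T"
      using Fstar_is_submodule(3) [OF F1] by (force simp: sum_distrib_left)
  qed
  moreover have "?U \<subseteq> ?T"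
  proof
    fix x assume "x \<in> ?U"
    then obtain j where j: "j < beta 1" and x: "x \<in> L j" by blast
    define u where "u = (\<lambda>t. if t = j then x else 0)"
    have "u \<in> Fstar beta lam L 1"
      unfolding Fstar_def u_def using x j assms by (auto simp: is_ideal_def)
    moreover have "x = (\<Sum>t<beta 1. u t)" unfolding u_def using j by simp
    ultimately show "x \<in> ?T" by blast
  qed
  ultimately show "ideal_gen ?U \<subseteq> ?T" by (rule ideal_gen_minimal)
qed

lemma dstar_one_image:
  fixes lam :: "nat \<Rightarrow> nat \<Rightarrow> nat \<Rightarrow> 'k::field" and L :: "nat \<Rightarrow> ('w, 'k) mpoly set"
  assumes "beta 0 = 1" and "\<And>j. j < beta 1 \<Longrightarrow> lam 1 0 j = 1"
    and "\<And>j. j < beta 1 \<Longrightarrow> is_ideal (L j)"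
  shows "{dstar beta lam 1 u 0 | u. u \<in> Fstar beta lam L 1} = ideal_gen (\<Union>j<beta 1. L j)"
proof -
  have "dstar beta lam 1 u 0 = (\<Sum>j<beta 1. u j)" for u :: "nat \<Rightarrow> ('w, 'k) mpoly"
    using assms(1,2) by (rule dstar_one_sum)
  then have "{dstar beta lam 1 u 0 | u. u \<in> Fstar beta lam L 1}
           = {(\<Sum>j<beta 1. u j) | u. u \<in> Fstar beta lam L 1}"
    by (simp only:)
  also have "\<dots> = ideal_gen (\<Union>j<beta 1. L j)"
    using assms(3) by (rule sum_image_Fstar_one)
  finally show ?thesis .
qed

lemma min_graded_res_scalar_matrix_mult_eq_zero:
  assumes res: "is_min_graded_res I m a p beta deg lam"
    and k: "k < beta n" and j: "j < beta (Suc (Suc n))"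
  shows "(\<Sum>l<beta (Suc n). lam (Suc n) k l * lam (Suc (Suc n)) l j) = 0"
proof -
  have compat: "\<And>i k j. 1 \<le> i \<Longrightarrow> k < beta (i - 1) \<Longrightarrow> j < beta i \<Longrightarrow> lam i k j \<noteq> 0 \<Longrightarrow>
                  exp_le (deg (i - 1) k) (deg i j)"
    and exact: "\<And>i. 1 \<le> i \<Longrightarrow> {u \<in> free_mod beta i. res_diff beta deg lam i u = (\<lambda>_. 0)}
                  = res_diff beta deg lam (Suc i) ` free_mod beta (Suc i)"
    using res unfolding is_min_graded_res_def by auto
  show ?thesis
  proof (rule scalar_matrix_mult_eq_zero [where deg = deg, OF k j])
    show "res_diff beta deg lam (Suc n) (res_diff beta deg lam (Suc (Suc n)) u) = (\<lambda>_. 0)"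
      if "u \<in> free_mod beta (Suc (Suc n))" for u
      using that exact [of "Suc n"] by (metis (mono_tags, lifting) image_eqI le_add1
          mem_Collect_eq plus_1_eq_Suc)
  qed (use k j compat [of "Suc n"] compat [of "Suc (Suc n)"] in auto)
qed

theorem lemma1p2:
  fixes I :: "('v::finite, 'k::field) mpoly set"
    and m :: nat and a :: "nat \<Rightarrow> ('v \<Rightarrow>\<^sub>0 nat)"
    and p :: nat and beta :: "nat \<Rightarrow> nat" and deg :: "nat \<Rightarrow> nat \<Rightarrow> ('v \<Rightarrow>\<^sub>0 nat)"
    and lam :: "nat \<Rightarrow> nat \<Rightarrow> nat \<Rightarrow> 'k"
    and L :: "nat \<Rightarrow> ('w::finite, 'k) mpoly set"
  assumes "monomial_ideal I" and "I \<noteq> UNIV"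
    and "inj_on a {..<m}" and "min_gens I = (\<lambda>j. mon 1 (a j)) ` {..<m}"
    and "is_min_graded_res I m a p beta deg lam"
    and "\<forall>j<m. monomial_ideal (L j)"
  shows "(\<forall>i. (\<lambda>_. 0) \<in> Fstar beta lam L i
             \<and> (\<forall>u\<in>Fstar beta lam L i. \<forall>v\<in>Fstar beta lam L i. (\<lambda>j. u j + v j) \<in> Fstar beta lam L i)
             \<and> (\<forall>r. \<forall>u\<in>Fstar beta lam L i. (\<lambda>j. r * u j) \<in> Fstar beta lam L i))
       \<and> (\<forall>i\<ge>1. \<forall>u\<in>Fstar beta lam L i. dstar beta lam i u \<in> Fstar beta lam L (i - 1))
       \<and> (\<forall>i\<ge>1. \<forall>(r::('w, 'k) mpoly) u v. dstar beta lam i (\<lambda>j. r * u j + v j)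
                      = (\<lambda>k. r * dstar beta lam i u k + dstar beta lam i v k))
       \<and> (\<forall>i\<ge>2. \<forall>u\<in>Fstar beta lam L i. dstar beta lam (i - 1) (dstar beta lam i u) = (\<lambda>_. 0))
       \<and> {dstar beta lam 1 u 0 | u. u \<in> Fstar beta lam L 1} = ideal_gen (\<Union>j<m. L j)"
proof -
  have res: "beta 0 = 1" "beta 1 = m" "\<And>j. j < m \<Longrightarrow> lam 1 0 j = 1"
    using assms(5) unfolding is_min_graded_res_def by auto
  have L_ideal: "\<And>j. j < beta 1 \<Longrightarrow> is_ideal (L j)"
    using assms(6) res(2) monomial_ideal_is_ideal by auto
  have Lstar_ideal: "\<And>i j. j < beta i \<Longrightarrow> is_ideal (Lstar beta lam L i j)"
    using Lstar_is_ideal [of beta L] L_ideal by blast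
  have "\<forall>i. (\<lambda>_. 0) \<in> Fstar beta lam L i
          \<and> (\<forall>u\<in>Fstar beta lam L i. \<forall>v\<in>Fstar beta lam L i. (\<lambda>j. u j + v j) \<in> Fstar beta lam L i)
          \<and> (\<forall>r. \<forall>u\<in>Fstar beta lam L i. (\<lambda>j. r * u j) \<in> Fstar beta lam L i)"
    using Fstar_is_submodule [OF Lstar_ideal] by blast
  moreover have "\<forall>i\<ge>1. \<forall>u\<in>Fstar beta lam L i. dstar beta lam i u \<in> Fstar beta lam L (i - 1)"
  proof (intro allI impI ballI)
    fix i :: nat and u :: "nat \<Rightarrow> ('w, 'k) mpoly"
    assume "1 \<le> i" and "u \<in> Fstar beta lam L i"
    then show "dstar beta lam i u \<in> Fstar beta lam L (i - 1)"
      using dstar_in_Fstar [OF Lstar_ideal] by (cases i) auto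
  qed
  moreover have "\<forall>i\<ge>1. \<forall>(r::('w, 'k) mpoly) u v. dstar beta lam i (\<lambda>j. r * u j + v j)
                   = (\<lambda>k. r * dstar beta lam i u k + dstar beta lam i v k)"
    using dstar_linear by blast
  moreover have "\<forall>i\<ge>2. \<forall>u\<in>Fstar beta lam L i. dstar beta lam (i - 1) (dstar beta lam i u) = (\<lambda>_. 0)"
  proof (intro allI impI ballI)
    fix i :: nat and u :: "nat \<Rightarrow> ('w, 'k) mpoly"
    assume "2 \<le> i"
    then obtain n where "i = Suc (Suc n)" by (metis add_2_eq_Suc le_Suc_ex)
    then show "dstar beta lam (i - 1) (dstar beta lam i u) = (\<lambda>_. 0)"
      using dstar_dstar_eq_zero [of beta n lam,
          OF min_graded_res_scalar_matrix_mult_eq_zero [OF assms(5)]] by simp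
  qed
  moreover have "{dstar beta lam 1 u 0 | u. u \<in> Fstar beta lam L 1} = ideal_gen (\<Union>j<m. L j)"
    using dstar_one_image [of beta lam L] res L_ideal by simp
  ultimately show ?thesis
    by (intro conjI) assumption+
qed

end
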